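(* Let $(R,\mathfrak{m})$ be a commutative Artinian local ring with identity, $\mathfrak{m}\neq0$ and $\mathfrak{m}^2=0$, and let $n\ge7$ be an integer. If $n$ is odd, then $\{3,4,5,\dots,n-4\}\cup\{n-2,n\}\subseteq L(x^n)$. If $n$ is even, then $\{2,3,4,5,\dots,n-4\}\cup\{n-2,n\}\subseteq L(x^n)$.
   Context: A nonunit polynomial in $R[x]$ is irreducible if in any factorization into two polynomials one factor is a unit of $R[x]$. A positive integer $k$ is a length of $f$ if $f$ is a product of $k$ irreducible polynomials of $R[x]$; $L(f)$ denotes the set of lengths of $f$. *)

theory Defs
  imports "HOL-Computational_Algebra.Polynomial" "HOL-Computational_Algebra.Factorial_Ring"
begin

definition is_ideal :: "'a::comm_ring_1 set \<Rightarrow> bool" where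
  "is_ideal I \<longleftrightarrow> 0 \<in> I \<and> (\<forall>a\<in>I. \<forall>b\<in>I. a + b \<in> I) \<and> (\<forall>a\<in>I. \<forall>r. r * a \<in> I)"

definition maximal_ideal :: "'a::comm_ring_1 set \<Rightarrow> bool" where
  "maximal_ideal M \<longleftrightarrow> is_ideal M \<and> M \<noteq> UNIV \<and>
     (\<forall>J. is_ideal J \<and> M \<subseteq> J \<longrightarrow> J = M \<or> J = UNIV)"

definition artinian :: "'a::comm_ring_1 itself \<Rightarrow> bool" where
  "artinian _ \<longleftrightarrow> (\<forall>I :: nat \<Rightarrow> 'a set. (\<forall>k. is_ideal (I k) \<and> I (Suc k) \<subseteq> I k)
      \<longrightarrow> (\<exists>N. \<forall>k\<ge>N. I k = I N))"

definition lengths :: "'a::comm_ring_1 poly \<Rightarrow> nat set" where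
  "lengths f = {k. k > 0 \<and> (\<exists>fs. length fs = k \<and> (\<forall>g\<in>set fs. irreducible g) \<and> prod_list fs = f)}"

end

theory Submission
  imports Defs
begin

text \<open>
  Since \<open>\<m>\<^sup>2 = 0\<close>, every element outside the maximal ideal \<open>\<m>\<close> is a unit, and
  the residue ring \<open>R/\<m>\<close> is a field. Hence a polynomial that is congruent modulo \<open>\<m>\<close>
  to a unit times \<open>x\<^sup>j\<close> can only split into factors of the same shape, \<open>u x\<^sup>i\<close> and
  \<open>v x\<^sup>l\<close> with \<open>i + l = j\<close>; a factor with \<open>i = 0\<close> is a unit, and if \<open>i, l > 0\<close> both
  constant terms lie in \<open>\<m>\<close>, so the product has constant term \<open>0\<close>. Thus for \<open>j \<ge> 1\<close>
  and nonzero constant term such a polynomial is irreducible. With \<open>0 \<noteq> a \<in> \<m>\<close> this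
  makes \<open>x\<close>, \<open>x\<^sup>e \<plusminus> a\<close> and \<open>x\<^sup>e - a - a x\<^sup>e\<^sup>-\<^sup>2\<close> irreducible, and
  \<open>(x\<^sup>i + a)(x\<^sup>i - a) = x\<^sup>2\<^sup>i\<close>,  \<open>(x\<^sup>2 + a)(x\<^sup>e + a)(x\<^sup>e - a - a x\<^sup>e\<^sup>-\<^sup>2) = x\<^sup>2\<^sup>e\<^sup>+\<^sup>2\<close>;
  padding with factors \<open>x\<close> yields the lengths \<open>k\<close> with \<open>n - k\<close> even, respectively
  odd and at least \<open>5\<close>.
\<close>

lemma maximal_ideal_square_zero_notin_is_unit:
  fixes M :: "'a::comm_ring_1 set"
  assumes max: "maximal_ideal M" and sq: "\<forall>x\<in>M. \<forall>y\<in>M. x * y = 0" and a: "a \<notin> M"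
  shows "a dvd 1"
proof -
  have M: "0 \<in> M" "\<And>x y. x \<in> M \<Longrightarrow> y \<in> M \<Longrightarrow> x + y \<in> M" "\<And>x r. x \<in> M \<Longrightarrow> r * x \<in> M"
    using max unfolding maximal_ideal_def is_ideal_def by auto
  define J where "J = {t + r * a | t r. t \<in> M}"
  have "is_ideal J" unfolding is_ideal_def
  proof (intro conjI ballI allI)
    have "0 = 0 + 0 * a" by simp
    then show "0 \<in> J" unfolding J_def using M(1) by blast
  next
    fix x y assume "x \<in> J" "y \<in> J"
    then obtain t1 r1 t2 r2 where "x = t1 + r1 * a" "y = t2 + r2 * a" "t1 \<in> M" "t2 \<in> M"
      unfolding J_def by blast
    moreover have "x + y = (t1 + t2) + (r1 + r2) * a" if "x = t1 + r1 * a" "y = t2 + r2 * a"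
      using that by (simp add: algebra_simps)
    ultimately show "x + y \<in> J" unfolding J_def using M(2) by blast
  next
    fix x s assume "x \<in> J"
    then obtain t r where "x = t + r * a" "t \<in> M" unfolding J_def by blast
    moreover have "s * x = s * t + (s * r) * a" if "x = t + r * a"
      using that by (simp add: algebra_simps)
    ultimately show "s * x \<in> J" unfolding J_def using M(3) by blast
  qed
  moreover have "M \<subseteq> J" unfolding J_def by (force intro: exI[of _ 0])
  moreover have "a \<in> J" unfolding J_def using M(1) by (force intro: exI[of _ 1])
  ultimately have "J = UNIV" using max a unfolding maximal_ideal_def by blast
  then obtain t r where tr: "1 = t + r * a" "t \<in> M" unfolding J_def by blast
  have "r * a = 1 - t" using tr(1) by (simp add: algebra_simps)
  then have "a * (r * (1 + t)) = (1 - t) * (1 + t)" by (metis mult.assoc mult.commute)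
  also have "\<dots> = 1 - t * t" by (simp add: algebra_simps)
  also have "\<dots> = 1" using sq tr(2) by simp
  finally show ?thesis by (metis dvdI)
qed

lemma xpow_eq_monom: "[:0, 1:] ^ n = monom 1 n"
  by (simp add: monom_altdef)

lemma length_in_lengths:
  fixes fs :: "'a::comm_ring_1 poly list"
  assumes "fs \<noteq> []" "\<forall>g\<in>set fs. irreducible g"
  shows "length fs \<in> lengths (prod_list fs)"
  using assms unfolding lengths_def by auto

lemma square_zero_triple_product:
  fixes A :: "'a::comm_ring_1"
  assumes "A * A = 0"
  shows "(P + A) * (P * Y + A) * (P * Y + (- A - A * Y)) = P * P * P * Y * Y"
proof -
  have "(P + A) * (P * Y + A) * (P * Y + (- A - A * Y))
      = P * P * P * Y * Y - (A * A) * (P * (1 + Y) * (1 + Y) - P * Y + A * (1 + Y))"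
    by (simp add: algebra_simps)
  then show ?thesis using assms by simp
qed

locale square_zero_local_ring =
  fixes m :: "'a::comm_ring_1 set"
  assumes ideal: "is_ideal m"
    and one_notin: "1 \<notin> m"
    and notin_is_unit: "a \<notin> m \<Longrightarrow> a dvd 1"
    and mult_eq_0: "a \<in> m \<Longrightarrow> b \<in> m \<Longrightarrow> a * b = 0"

lemma square_zero_local_ringI:
  fixes M :: "'a::comm_ring_1 set"
  assumes max: "maximal_ideal M" and sq: "\<forall>x\<in>M. \<forall>y\<in>M. x * y = 0"
  shows "square_zero_local_ring M"
proof
  show "is_ideal M" using max unfolding maximal_ideal_def by blast
  show "1 \<notin> M"
  proof
    assume "1 \<in> M"
    then have "M = UNIV" using \<open>is_ideal M\<close> unfolding is_ideal_def by (metis UNIV_eq_I mult.right_neutral)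
    then show False using max unfolding maximal_ideal_def by blast
  qed
qed (use maximal_ideal_square_zero_notin_is_unit[OF max sq] sq in auto)

context square_zero_local_ring
begin

lemma zero_in: "0 \<in> m"
  and add_in: "a \<in> m \<Longrightarrow> b \<in> m \<Longrightarrow> a + b \<in> m"
  and mult_in_left: "b \<in> m \<Longrightarrow> a * b \<in> m"
  using ideal unfolding is_ideal_def by auto

lemma mult_in_right: "a \<in> m \<Longrightarrow> a * b \<in> m"
  using mult_in_left[of a b] by (simp add: mult.commute)

lemma uminus_in: "a \<in> m \<Longrightarrow> - a \<in> m"
  using mult_in_left[of a "- 1"] by simp

lemma diff_in: "a \<in> m \<Longrightarrow> b \<in> m \<Longrightarrow> a - b \<in> m"
  using add_in[OF _ uminus_in] by simp

lemma sum_in: "(\<And>x. x \<in> A \<Longrightarrow> f x \<in> m) \<Longrightarrow> sum f A \<in> m"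
  by (induction A rule: infinite_finite_induct) (auto intro: add_in zero_in)

lemma unit_notin: "u dvd 1 \<Longrightarrow> u \<notin> m"
  by (metis dvdE mult_in_right one_notin)

lemma mult_notin: "a \<notin> m \<Longrightarrow> b \<notin> m \<Longrightarrow> a * b \<notin> m"
  using unit_notin notin_is_unit mult_dvd_mono[of a 1 b 1] by auto

lemma add_notin: "a \<notin> m \<Longrightarrow> b \<in> m \<Longrightarrow> a + b \<notin> m"
  using diff_in[of "a + b" b] by auto

lemma coeff_mult_notin:
  fixes f g :: "'a poly"
  assumes "i \<le> n" "coeff f i \<notin> m" "coeff g (n - i) \<notin> m"
    and others: "\<And>k. k \<le> n \<Longrightarrow> k \<noteq> i \<Longrightarrow> coeff f k * coeff g (n - k) \<in> m"
  shows "coeff (f * g) n \<notin> m"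
proof -
  have "coeff (f * g) n = coeff f i * coeff g (n - i) + (\<Sum>k\<in>{..n} - {i}. coeff f k * coeff g (n - k))"
    unfolding coeff_mult using \<open>i \<le> n\<close> by (subst sum.remove[of _ i]) auto
  moreover have "(\<Sum>k\<in>{..n} - {i}. coeff f k * coeff g (n - k)) \<in> m"
    using others by (intro sum_in) auto
  ultimately show ?thesis using assms(2,3) by (simp add: add_notin mult_notin)
qed

text \<open>The residue ring is a domain: the lowest (highest) coefficients outside \<open>\<m>\<close> multiply.\<close>

lemma coeff_mult_least_notin:
  fixes f g :: "'a poly"
  assumes "\<forall>p<i. coeff f p \<in> m" "coeff f i \<notin> m" "\<forall>q<l. coeff g q \<in> m" "coeff g l \<notin> m"
  shows "coeff (f * g) (i + l) \<notin> m"
proof (rule coeff_mult_notin)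
  fix k assume "k \<le> i + l" "k \<noteq> i"
  then consider "k < i" | "i + l - k < l" by linarith
  then show "coeff f k * coeff g (i + l - k) \<in> m"
    by cases (use assms(1,3) mult_in_left mult_in_right in blast)+
qed (use assms(2,4) in auto)

lemma coeff_mult_greatest_notin:
  fixes f g :: "'a poly"
  assumes "\<forall>p>i. coeff f p \<in> m" "coeff f i \<notin> m" "\<forall>q>l. coeff g q \<in> m" "coeff g l \<notin> m"
  shows "coeff (f * g) (i + l) \<notin> m"
proof (rule coeff_mult_notin)
  fix k assume "k \<le> i + l" "k \<noteq> i"
  then consider "k > i" | "i + l - k > l" by linarith
  then show "coeff f k * coeff g (i + l - k) \<in> m"
    by cases (use assms(1,3) mult_in_left mult_in_right in blast)+
qed (use assms(2,4) in auto)

lemma coeff_mult_in: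
  fixes f g :: "'a poly"
  assumes "\<forall>p. coeff f p \<in> m"
  shows "coeff (f * g) n \<in> m"
  unfolding coeff_mult using assms by (intro sum_in) (auto intro: mult_in_right)

lemma least_coeff_notin:
  fixes f :: "'a poly"
  assumes "\<exists>p. coeff f p \<notin> m"
  obtains i where "\<forall>p<i. coeff f p \<in> m" "coeff f i \<notin> m"
  using assms exists_least_iff[of "\<lambda>p. coeff f p \<notin> m"] by blast

lemma greatest_coeff_notin:
  fixes f :: "'a poly"
  assumes "\<exists>p. coeff f p \<notin> m"
  obtains i where "\<forall>p>i. coeff f p \<in> m" "coeff f i \<notin> m"
proof -
  obtain p where "coeff f p \<notin> m" using assms by blast
  moreover have "\<forall>p. coeff f p \<notin> m \<longrightarrow> p \<le> degree f"
    by (metis le_degree zero_in)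
  ultimately show ?thesis
    using Nat.ex_has_greatest_nat[of "\<lambda>p. coeff f p \<notin> m"] that by (metis not_le)
qed

text \<open>\<open>F\<close> is congruent modulo \<open>\<m>\<close> to a unit multiple of \<open>x\<^sup>j\<close>.\<close>

definition monomial_modulo :: "nat \<Rightarrow> 'a poly \<Rightarrow> bool" where
  "monomial_modulo j F \<longleftrightarrow> coeff F j \<notin> m \<and> (\<forall>p. p \<noteq> j \<longrightarrow> coeff F p \<in> m)"

lemma monomial_modulo_unique: "monomial_modulo i F \<Longrightarrow> monomial_modulo j F \<Longrightarrow> i = j"
  unfolding monomial_modulo_def by blast

lemma monomial_modulo_one: "monomial_modulo 0 1"
  unfolding monomial_modulo_def using one_notin zero_in by (simp add: coeff_1)

lemma monomial_modulo_factors: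
  fixes f g :: "'a poly"
  assumes "monomial_modulo j (f * g)"
  obtains i l where "i + l = j" "monomial_modulo i f" "monomial_modulo l g"
proof -
  have "\<exists>p. coeff f p \<notin> m" "\<exists>p. coeff g p \<notin> m"
    using assms coeff_mult_in[of f g j] coeff_mult_in[of g f j]
    unfolding monomial_modulo_def by (auto simp: mult.commute)
  then obtain i l i' l' where
    i: "\<forall>p<i. coeff f p \<in> m" "coeff f i \<notin> m" and l: "\<forall>p<l. coeff g p \<in> m" "coeff g l \<notin> m" and
    i': "\<forall>p>i'. coeff f p \<in> m" "coeff f i' \<notin> m" and l': "\<forall>p>l'. coeff g p \<in> m" "coeff g l' \<notin> m"
    by (metis least_coeff_notin greatest_coeff_notin)
  have "i + l = j" "i' + l' = j"
    using coeff_mult_least_notin[OF i l] coeff_mult_greatest_notin[OF i' l'] assms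
    unfolding monomial_modulo_def by auto
  moreover have "i \<le> i'" "l \<le> l'"
    using i(2) i'(1) l(2) l'(1) by (meson not_le)+
  ultimately have "i' = i" "l' = l" by auto
  then have "monomial_modulo i f" "monomial_modulo l g"
    using i i' l l' unfolding monomial_modulo_def by (metis linorder_neqE_nat)+
  with \<open>i + l = j\<close> show ?thesis using that by blast
qed

lemma monomial_modulo_0_is_unit:
  fixes f :: "'a poly"
  assumes "monomial_modulo 0 f"
  shows "f dvd 1"
proof -
  define H where "H = f - [:coeff f 0:]"
  have "\<forall>p. coeff H p \<in> m"
    using assms zero_in unfolding H_def monomial_modulo_def by (auto simp: coeff_pCons split: nat.splits)
  then have "H * H = 0"
    by (intro poly_eqI) (simp add: coeff_mult mult_eq_0)
  obtain d where d: "coeff f 0 * d = 1"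
    using assms notin_is_unit unfolding monomial_modulo_def by (metis dvdE)
  have "([:coeff f 0:] + H) * ([:d:] - [:d:] * [:d:] * H)
      = [:coeff f 0 * d:] - [:coeff f 0 * d:] * [:d:] * H + H * [:d:] - [:d:] * [:d:] * (H * H)"
    by (simp add: algebra_simps)
  also have "\<dots> = 1"
    using d \<open>H * H = 0\<close> by (simp add: one_pCons mult.commute)
  finally have "f * ([:d:] - [:d:] * [:d:] * H) = 1" unfolding H_def by simp
  then show ?thesis by (metis dvdI)
qed

lemma irreducible_monomial_modulo:
  fixes F :: "'a poly"
  assumes "monomial_modulo j F" "j \<ge> 1" "j = 1 \<or> coeff F 0 \<noteq> 0"
  shows "irreducible F"
proof (rule irreducibleI)
  show "F \<noteq> 0" using assms(1) zero_in unfolding monomial_modulo_def by auto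
  show "\<not> F dvd 1"
  proof
    assume "F dvd 1"
    then obtain g where "monomial_modulo 0 (F * g)"
      using monomial_modulo_one by (metis dvdE)
    then obtain i where "i \<le> 0" "monomial_modulo i F"
      by (metis le_add1 monomial_modulo_factors)
    then show False using assms(1,2) monomial_modulo_unique by fastforce
  qed
next
  fix a b assume "F = a * b"
  then obtain i l where il: "i + l = j" "monomial_modulo i a" "monomial_modulo l b"
    using assms(1) monomial_modulo_factors by metis
  show "a dvd 1 \<or> b dvd 1"
  proof (cases "i = 0 \<or> l = 0")
    case True
    then show ?thesis using il monomial_modulo_0_is_unit by blast
  next
    case False
    then have "coeff a 0 \<in> m" "coeff b 0 \<in> m"
      using il unfolding monomial_modulo_def by auto
    then have "coeff F 0 = 0" using \<open>F = a * b\<close> mult_eq_0 by (simp add: coeff_mult_0)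
    moreover have "j \<noteq> 1" using False il(1) by auto
    ultimately show ?thesis using assms(3) by simp
  qed
qed

lemma irreducible_xpow_plus:
  fixes p :: "'a poly"
  assumes "e \<ge> 1" "\<forall>k. coeff p k \<in> m" "e = 1 \<or> coeff p 0 \<noteq> 0"
  shows "irreducible ([:0, 1:] ^ e + p)"
proof (rule irreducible_monomial_modulo)
  show "monomial_modulo e ([:0, 1:] ^ e + p)"
    using assms(2) one_notin add_notin zero_in
    by (auto simp: monomial_modulo_def xpow_eq_monom add.commute)
qed (use assms in \<open>auto simp: xpow_eq_monom\<close>)

lemma even_codegree_in_lengths:
  assumes a: "a \<in> m" "a \<noteq> 0" and k: "2 \<le> k" "k \<le> n" "even (n - k)"
  shows "k \<in> lengths ([:0, 1:] ^ n :: 'a poly)"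
proof -
  let ?X = "[:0, 1:] :: 'a poly"
  obtain i where i: "i \<ge> 1" "n = 2 * i + (k - 2)"
  proof -
    obtain j where "n - k = 2 * j" using k(3) by (elim evenE)
    then show thesis using that[of "Suc j"] k by simp
  qed
  define fs where "fs = [?X ^ i + [:a:], ?X ^ i + [:- a:]] @ replicate (k - 2) ?X"
  have "\<forall>g\<in>set fs. irreducible g"
    unfolding fs_def
    using irreducible_xpow_plus[of 1 0] irreducible_xpow_plus[of i "[:a:]"]
      irreducible_xpow_plus[of i "[:- a:]"] a i(1) zero_in uminus_in
    by (auto simp: coeff_pCons split: nat.splits)
  moreover have "prod_list fs = ?X ^ n"
  proof -
    have "[:a:] * [:a:] = (0 :: 'a poly)" using mult_eq_0[OF a(1) a(1)] by simp
    moreover have "(?X ^ i + [:a:]) * (?X ^ i + [:- a:]) = ?X ^ i * ?X ^ i - [:a:] * [:a:]"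
      by (simp add: algebra_simps)
    ultimately have "(?X ^ i + [:a:]) * (?X ^ i + [:- a:]) = ?X ^ (2 * i)"
      by (simp add: mult_2 power_add)
    then show ?thesis unfolding fs_def i(2) by (simp add: power_add mult.assoc[symmetric])
  qed
  moreover have "length fs = k" unfolding fs_def using k by simp
  ultimately show ?thesis using length_in_lengths[of fs] by (simp add: fs_def)
qed

lemma odd_codegree_in_lengths:
  assumes a: "a \<in> m" "a \<noteq> 0" and k: "3 \<le> k" "k + 5 \<le> n" "odd (n - k)"
  shows "k \<in> lengths ([:0, 1:] ^ n :: 'a poly)"
proof -
  let ?X = "[:0, 1:] :: 'a poly"
  obtain d where d: "d \<ge> 1" "n = 2 * d + 6 + (k - 3)"
  proof -
    obtain j where "n - k = 2 * j + 1" using k(3) by (elim oddE)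
    then show thesis using that[of "j - 1"] k by simp
  qed
  define p where "p = [:- a:] - monom a d"
  define fs where "fs = [?X ^ 2 + [:a:], ?X ^ (2 + d) + [:a:], ?X ^ (2 + d) + p] @ replicate (k - 3) ?X"
  have "\<forall>g\<in>set fs. irreducible g"
    unfolding fs_def p_def
    using irreducible_xpow_plus[of 1 0] irreducible_xpow_plus[of 2 "[:a:]"]
      irreducible_xpow_plus[of "2 + d" "[:a:]"] irreducible_xpow_plus[of "2 + d" "[:- a:] - monom a d"]
      a d(1) zero_in uminus_in diff_in
    by (auto simp: coeff_pCons split: nat.splits)
  moreover have "prod_list fs = ?X ^ n"
  proof -
    have "[:a:] * [:a:] = (0 :: 'a poly)" using mult_eq_0[OF a(1) a(1)] by simp
    moreover have "p = - [:a:] - [:a:] * ?X ^ d"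
      unfolding p_def by (simp add: monom_altdef)
    ultimately have "(?X ^ 2 + [:a:]) * (?X ^ (2 + d) + [:a:]) * (?X ^ (2 + d) + p)
        = ?X ^ 2 * ?X ^ 2 * ?X ^ 2 * ?X ^ d * ?X ^ d"
      unfolding power_add by (simp only: square_zero_triple_product)
    also have "\<dots> = ?X ^ (2 * d + 6)"
      by (simp flip: power_add)
    finally have "(?X ^ 2 + [:a:]) * (?X ^ (2 + d) + [:a:]) * (?X ^ (2 + d) + p) = ?X ^ (2 * d + 6)" .
    moreover have "prod_list fs = (?X ^ 2 + [:a:]) * (?X ^ (2 + d) + [:a:]) * (?X ^ (2 + d) + p) * ?X ^ (k - 3)"
      unfolding fs_def by (simp only: prod_list.Cons prod_list.append prod_list_replicate mult.assoc mult_1_right append.simps)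
    ultimately show ?thesis unfolding d(2) by (simp only: power_add)
  qed
  moreover have "length fs = k" unfolding fs_def using k by simp
  ultimately show ?thesis using length_in_lengths[of fs] by (simp add: fs_def)
qed

end

theorem lemma4p13:
  fixes m :: "'a::comm_ring_1 set" and n :: nat
  assumes "artinian TYPE('a)"
    and "maximal_ideal m"
    and "\<forall>J. maximal_ideal J \<longrightarrow> J = m"
    and "m \<noteq> {0}"
    and "\<forall>a\<in>m. \<forall>b\<in>m. a * b = 0"
    and "n \<ge> 7"
  shows "(odd n \<longrightarrow> {3..n-4} \<union> {n-2, n} \<subseteq> lengths ([:0, 1:] ^ n :: 'a poly))
       \<and> (even n \<longrightarrow> {2..n-4} \<union> {n-2, n} \<subseteq> lengths ([:0, 1:] ^ n :: 'a poly))"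
proof -
  interpret square_zero_local_ring m
    using square_zero_local_ringI assms(2,5) .
  obtain a where a: "a \<in> m" "a \<noteq> 0" using assms(4) zero_in by blast
  have "k \<in> lengths ([:0, 1:] ^ n :: 'a poly)"
    if "k \<in> {3..n-4} \<union> {n-2, n} \<or> even n \<and> k \<in> {2..n-4}" for k
  proof -
    from that have "3 \<le> k \<and> k \<le> n - 4 \<or> k = n - 2 \<or> k = n \<or> even n \<and> 2 \<le> k \<and> k \<le> n - 4"
      by auto
    with assms(6)
    have "(2 \<le> k \<and> k \<le> n \<and> even (n - k)) \<or> (3 \<le> k \<and> k + 5 \<le> n \<and> odd (n - k))"
      by presburger
    then show ?thesis using even_codegree_in_lengths[OF a] odd_codegree_in_lengths[OF a] by blast
  qed
  then show ?thesis using assms(6) by auto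
qed

end
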